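(* Let $\mathbb F$ be algebraically closed with $\operatorname{char}\mathbb F\ne2$, and let $a,b,c,\nu\in\mathbb F$. There exists an $\Re$-module $M_\nu(a,b,c)$ with an $\mathbb F$-basis $\{m_i\}_{i=0}^\infty$ such that $Am_i=\theta_im_i+m_{i+1}$ for all $i\ge0$, $Bm_0=\theta_0^*m_0$, $Bm_i=\theta_i^*m_i+\varphi_im_{i-1}$ for all $i\ge1$, and on which $\alpha,\beta,\delta$ act as scalar multiplication by $\zeta,\zeta^*,\eta$, respectively.
   Context: The Racah algebra $\Re$ is the unital associative $\mathbb F$-algebra with generators $A,B,C,D$ and relations $[A,B]=[B,C]=[C,A]=2D$ together with the requirement that each of $\alpha:=[A,D]+AC-BA$, $\beta:=[B,D]+BA-CB$, $\gamma:=[C,D]+CB-AC$ is central in $\Re$; $\delta:=A+B+C$. For $a,b,c,\nu\in\mathbb F$ and $i\in\mathbb Z$: $\theta_i=(a+\tfrac\nu2-i)(a+\tfrac\nu2-i+1)$, $\theta_i^*=(b+\tfrac\nu2-i)(b+\tfrac\nu2-i+1)$, $\varphi_i=i(i-\nu-1)(a+b+c+\tfrac\nu2-i+2)(a+b-c+\tfrac\nu2-i+1)$, $\zeta=(c-b)(c+b+1)(a-\tfrac\nu2)(a+\tfrac\nu2+1)$, $\zeta^*=(a-c)(a+c+1)(b-\tfrac\nu2)(b+\tfrac\nu2+1)$, $\eta=\tfrac\nu2(\tfrac\nu2+1)+a(a+1)+b(b+1)+c(c+1)$. *)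

theory Defs
  imports "HOL-Computational_Algebra.Polynomial"
begin

definition alg_closed :: "'a::field itself \<Rightarrow> bool" where
  "alg_closed _ \<longleftrightarrow> (\<forall>p::'a poly. degree p \<ge> 1 \<longrightarrow> (\<exists>x. poly p x = 0))"

text \<open>F-linear endomorphisms of the vector space F[x]; F[x] has F-basis m_i = x^i = monom 1 i.\<close>
definition flin :: "('a::field poly \<Rightarrow> 'a poly) \<Rightarrow> bool" where
  "flin T \<longleftrightarrow> (\<forall>p q. T (p + q) = T p + T q) \<and> (\<forall>c p. T (smult c p) = smult c (T p))"

definition comm :: "('a::field poly \<Rightarrow> 'a poly) \<Rightarrow> ('a poly \<Rightarrow> 'a poly) \<Rightarrow> 'a poly \<Rightarrow> 'a poly" where
  "comm X Y = (\<lambda>v. X (Y v) - Y (X v))"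

definition r_alpha where "r_alpha A B C D = (\<lambda>v. comm A D v + A (C v) - B (A v))"
definition r_beta  where "r_beta A B C D = (\<lambda>v. comm B D v + B (A v) - C (B v))"
definition r_gamma where "r_gamma A B C D = (\<lambda>v. comm C D v + C (B v) - A (C v))"
definition r_delta where "r_delta A B C = (\<lambda>v. A v + B v + C v)"

text \<open>(A,B,C,D) define a module structure of the Racah algebra on F[x]:
  linear operators satisfying the defining relations, where "alpha, beta, gamma central"
  means their images commute with the images of all generators.\<close>
definition racah_module ::
  "('a::field poly \<Rightarrow> 'a poly) \<Rightarrow> ('a poly \<Rightarrow> 'a poly) \<Rightarrow> ('a poly \<Rightarrow> 'a poly) \<Rightarrow> ('a poly \<Rightarrow> 'a poly) \<Rightarrow> bool" where
  "racah_module A B C D \<longleftrightarrow>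
     flin A \<and> flin B \<and> flin C \<and> flin D \<and>
     comm A B = (\<lambda>v. smult 2 (D v)) \<and> comm B C = (\<lambda>v. smult 2 (D v)) \<and>
     comm C A = (\<lambda>v. smult 2 (D v)) \<and>
     (\<forall>Z \<in> {r_alpha A B C D, r_beta A B C D, r_gamma A B C D}.
        \<forall>X \<in> {A, B, C, D}. comm Z X = (\<lambda>v. 0))"

definition theta :: "'a::field \<Rightarrow> 'a \<Rightarrow> nat \<Rightarrow> 'a" where
  "theta a \<nu> i = (a + \<nu>/2 - of_nat i) * (a + \<nu>/2 - of_nat i + 1)"

definition theta_s :: "'a::field \<Rightarrow> 'a \<Rightarrow> nat \<Rightarrow> 'a" where
  "theta_s b \<nu> i = (b + \<nu>/2 - of_nat i) * (b + \<nu>/2 - of_nat i + 1)"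

definition phi :: "'a::field \<Rightarrow> 'a \<Rightarrow> 'a \<Rightarrow> 'a \<Rightarrow> nat \<Rightarrow> 'a" where
  "phi a b c \<nu> i = of_nat i * (of_nat i - \<nu> - 1) * (a + b + c + \<nu>/2 - of_nat i + 2)
                   * (a + b - c + \<nu>/2 - of_nat i + 1)"

definition zeta :: "'a::field \<Rightarrow> 'a \<Rightarrow> 'a \<Rightarrow> 'a \<Rightarrow> 'a" where
  "zeta a b c \<nu> = (c - b) * (c + b + 1) * (a - \<nu>/2) * (a + \<nu>/2 + 1)"

definition zeta_s :: "'a::field \<Rightarrow> 'a \<Rightarrow> 'a \<Rightarrow> 'a \<Rightarrow> 'a" where
  "zeta_s a b c \<nu> = (a - c) * (a + c + 1) * (b - \<nu>/2) * (b + \<nu>/2 + 1)"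

definition eta :: "'a::field \<Rightarrow> 'a \<Rightarrow> 'a \<Rightarrow> 'a \<Rightarrow> 'a" where
  "eta a b c \<nu> = (\<nu>/2) * (\<nu>/2 + 1) + a * (a + 1) + b * (b + 1) + c * (c + 1)"

end

theory Submission
  imports Defs
begin

text \<open>Take \<open>m\<^sub>i = x\<^sup>i\<close> in \<open>F[x]\<close>. Let \<open>A\<close> act as the diagonal operator \<open>\<theta>\<close> plus multiplication
  by \<open>x\<close>, and \<open>B\<close> as the diagonal operator \<open>\<theta>\<^sup>*\<close> plus the \<open>\<phi>\<close>-weighted shift down; put
  \<open>C = \<eta> - A - B\<close> and \<open>D = [A,B]/2\<close>. Then \<open>[A,B] = [B,C] = [C,A] = 2D\<close> holds for any two linear
  operators, and \<open>\<alpha> + \<beta> + \<gamma> = [A+B+C, D] = 0\<close>. So it only remains that \<open>\<alpha>\<close> and \<open>\<beta>\<close> act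
  as the scalars \<open>\<zeta>\<close> and \<open>\<zeta>\<^sup>*\<close>; on each \<open>m\<^sub>i\<close> this is a polynomial identity in \<open>i\<close>.\<close>

lemma flin_add: "flin T \<Longrightarrow> T (p + q) = T p + T q"
  unfolding flin_def by blast

lemma flin_smult: "flin T \<Longrightarrow> T (smult c p) = smult c (T p)"
  unfolding flin_def by blast

lemma flin_zero: "flin T \<Longrightarrow> T 0 = 0"
  by (metis flin_smult smult_0_left)

lemma flin_minus: "flin T \<Longrightarrow> T (- p) = - T p"
  by (metis flin_smult smult_1_left smult_minus_left)

lemma flin_diff: "flin T \<Longrightarrow> T (p - q) = T p - T q"
  by (metis diff_conv_add_uminus flin_add flin_minus)

lemma flin_sum: "flin T \<Longrightarrow> T (sum f S) = (\<Sum>x\<in>S. T (f x))"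
  by (induction S rule: infinite_finite_induct) (auto simp: flin_zero flin_add)

lemma flin_smult_op: "flin (\<lambda>v. smult z v)"
  by (simp add: flin_def smult_add_right mult.commute)

lemma flin_eq_smult_if_monom:
  assumes "flin T" and "\<And>i. T (monom 1 i) = smult z (monom 1 i)"
  shows "T p = smult z p"
proof -
  have p: "p = (\<Sum>i\<le>degree p. smult (coeff p i) (monom 1 i))"
    by (simp add: smult_monom poly_as_sum_of_monoms)
  have "T p = (\<Sum>i\<le>degree p. smult (coeff p i) (T (monom 1 i)))"
    by (subst p) (simp add: assms(1) flin_sum flin_smult)
  also have "\<dots> = (\<Sum>i\<le>degree p. smult z (smult (coeff p i) (monom 1 i)))"
    by (simp add: assms(2) mult.commute)
  also have "\<dots> = smult z p"
    by (subst (2) p) (simp add: flin_sum[OF flin_smult_op])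
  finally show ?thesis .
qed

lemma comm_smult_op_left: "flin X \<Longrightarrow> comm (\<lambda>v. smult z v) X = (\<lambda>v. 0)"
  by (simp add: comm_def flin_smult)

lemma flin_r_alpha: "\<lbrakk>flin A; flin B; flin C; flin D\<rbrakk> \<Longrightarrow> flin (r_alpha A B C D)"
  by (simp add: flin_def r_alpha_def comm_def algebra_simps smult_add_right smult_diff_right)

lemma flin_r_beta: "\<lbrakk>flin A; flin B; flin C; flin D\<rbrakk> \<Longrightarrow> flin (r_beta A B C D)"
  by (simp add: flin_def r_beta_def comm_def algebra_simps smult_add_right smult_diff_right)

lemma r_alpha_add_r_beta_add_r_gamma:
  "flin D \<Longrightarrow> r_alpha A B C D v + r_beta A B C D v + r_gamma A B C D v = comm (r_delta A B C) D v"
  by (simp add: r_alpha_def r_beta_def r_gamma_def r_delta_def comm_def flin_add)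

context
  fixes A B C D :: "'a::field poly \<Rightarrow> 'a poly" and e :: 'a
  assumes flin_A: "flin A" and flin_B: "flin B"
    and C_def: "C = (\<lambda>v. smult e v - A v - B v)"
    and D_def: "D = (\<lambda>v. smult (1/2) (comm A B v))"
    and two: "(2::'a) \<noteq> 0"
begin

lemma flin_C: "flin C"
  by (simp add: flin_def C_def flin_add[OF flin_A] flin_add[OF flin_B] flin_smult[OF flin_A]
      flin_smult[OF flin_B] algebra_simps smult_add_right smult_diff_right)

lemma flin_D: "flin D"
  by (simp add: flin_def D_def comm_def flin_add[OF flin_A] flin_add[OF flin_B] flin_smult[OF flin_A]
      flin_smult[OF flin_B] algebra_simps smult_add_right smult_diff_right)

lemma r_alpha_eq:
  "r_alpha A B C D v = smult (1/2) (A (A (B v)) + B (A (A v))) - A (B (A v))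
     + smult e (A v) - A (A v) - A (B v) - B (A v)"
  using two by (simp add: r_alpha_def comm_def C_def D_def flin_diff[OF flin_A] flin_smult[OF flin_A]
      flin_add[OF flin_A] algebra_simps smult_add_right smult_diff_right numeral_mult_conv_smult)

lemma r_beta_eq:
  "r_beta A B C D v = B (A (B v)) - smult (1/2) (B (B (A v)) + A (B (B v)))
     + B (A v) - smult e (B v) + A (B v) + B (B v)"
  using two by (simp add: r_beta_def comm_def C_def D_def flin_diff[OF flin_B] flin_smult[OF flin_B]
      flin_add[OF flin_B] algebra_simps smult_add_right smult_diff_right numeral_mult_conv_smult)

lemma racah_module_if_scalar_alpha_beta:
  assumes alpha: "\<And>v. r_alpha A B C D v = smult z v"
    and beta: "\<And>v. r_beta A B C D v = smult z' v"
  shows "racah_module A B C D"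
  unfolding racah_module_def
proof (intro conjI ballI)
  show "comm A B = (\<lambda>v. smult 2 (D v))"
    using two by (simp add: D_def)
  show "comm B C = (\<lambda>v. smult 2 (D v))" "comm C A = (\<lambda>v. smult 2 (D v))"
    using two by (auto simp: comm_def C_def D_def flin_diff[OF flin_A] flin_diff[OF flin_B]
        flin_smult[OF flin_A] flin_smult[OF flin_B])
  have "r_delta A B C = (\<lambda>v. smult e v)"
    by (simp add: r_delta_def C_def)
  then have "smult z v + smult z' v + r_gamma A B C D v = 0" for v
    using r_alpha_add_r_beta_add_r_gamma[OF flin_D, of A B C v]
    by (simp only: alpha beta comm_smult_op_left[OF flin_D])
  then have "r_gamma A B C D v = smult (- (z + z')) v" for v
    by (metis neg_eq_iff_add_eq_0 smult_add_left smult_minus_left)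
  then have scalar: "r_alpha A B C D = (\<lambda>v. smult z v)" "r_beta A B C D = (\<lambda>v. smult z' v)"
      "r_gamma A B C D = (\<lambda>v. smult (- (z + z')) v)"
    using alpha beta by auto
  show "comm Z X = (\<lambda>v. 0)"
    if "Z \<in> {r_alpha A B C D, r_beta A B C D, r_gamma A B C D}" and "X \<in> {A, B, C, D}" for Z X
    using that by (auto simp: scalar comm_smult_op_left flin_A flin_B flin_C flin_D)
qed (fact flin_A flin_B flin_C flin_D)+

end

definition diag_op :: "(nat \<Rightarrow> 'a::comm_semiring_0) \<Rightarrow> 'a poly \<Rightarrow> 'a poly" where
  "diag_op f p = Abs_poly (\<lambda>n. f n * coeff p n)"

lemma coeff_diag_op [simp]: "coeff (diag_op f p) n = f n * coeff p n"
  unfolding diag_op_def by (subst coeff_Abs_poly[of "degree p"]) (auto simp: coeff_eq_0)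

definition raising_op :: "(nat \<Rightarrow> 'a::comm_semiring_0) \<Rightarrow> 'a poly \<Rightarrow> 'a poly" where
  "raising_op \<theta> p = diag_op \<theta> p + pCons 0 p"

definition lowering_op :: "(nat \<Rightarrow> 'a::comm_semiring_0) \<Rightarrow> (nat \<Rightarrow> 'a) \<Rightarrow> 'a poly \<Rightarrow> 'a poly" where
  "lowering_op \<theta> \<phi> p = diag_op \<theta> p + diag_op (\<lambda>n. \<phi> (Suc n)) (poly_shift 1 p)"

lemma coeff_raising_op: "coeff (raising_op \<theta> p) n = \<theta> n * coeff p n + coeff (pCons 0 p) n"
  by (simp add: raising_op_def)

lemma coeff_lowering_op:
  "coeff (lowering_op \<theta> \<phi> p) n = \<theta> n * coeff p n + \<phi> (Suc n) * coeff p (Suc n)"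
  by (simp add: lowering_op_def coeff_poly_shift)

lemma flin_raising_op: "flin (raising_op \<theta>)"
  unfolding flin_def
  by (auto simp: poly_eq_iff coeff_raising_op coeff_pCons algebra_simps split: nat.split)

lemma flin_lowering_op: "flin (lowering_op \<theta> \<phi>)"
  unfolding flin_def by (auto simp: poly_eq_iff coeff_lowering_op algebra_simps)

lemma raising_op_monom:
  "raising_op \<theta> (monom 1 i) = smult (\<theta> i) (monom 1 i) + monom 1 (Suc i)"
  by (auto simp: poly_eq_iff coeff_raising_op coeff_pCons split: nat.split)

lemma lowering_op_monom_0: "lowering_op \<theta> \<phi> (monom 1 0) = smult (\<theta> 0) (monom 1 0)"
  by (auto simp: poly_eq_iff coeff_lowering_op)

lemma lowering_op_monom_Suc:
  "lowering_op \<theta> \<phi> (monom 1 (Suc k))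
     = smult (\<theta> (Suc k)) (monom 1 (Suc k)) + smult (\<phi> (Suc k)) (monom 1 k)"
  by (auto simp: poly_eq_iff coeff_lowering_op)

lemmas raising_op_linear =
  flin_add[OF flin_raising_op] flin_diff[OF flin_raising_op] flin_smult[OF flin_raising_op]

lemmas lowering_op_linear =
  flin_add[OF flin_lowering_op] flin_diff[OF flin_lowering_op] flin_smult[OF flin_lowering_op]

lemma nat_cases_0_1_SucSuc: "P 0 \<Longrightarrow> P (Suc 0) \<Longrightarrow> (\<And>k. P (Suc (Suc k))) \<Longrightarrow> P n"
  by (metis not0_implies_Suc)

lemma racah_scalar_identities_monom:
  fixes a b c \<nu> :: "'a::field" and i :: nat
  assumes two: "(2::'a) \<noteq> 0"
  defines "A \<equiv> raising_op (theta a \<nu>)" and "B \<equiv> lowering_op (theta_s b \<nu>) (phi a b c \<nu>)"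
    and "m \<equiv> monom 1 i"
  shows "smult (1/2) (A (A (B m)) + B (A (A m))) - A (B (A m))
      + smult (eta a b c \<nu>) (A m) - A (A m) - A (B m) - B (A m) = smult (zeta a b c \<nu>) m
    \<and> B (A (B m)) - smult (1/2) (B (B (A m)) + A (B (B m)))
      + B (A m) - smult (eta a b c \<nu>) (B m) + A (B m) + B (B m) = smult (zeta_s a b c \<nu>) m"
proof -
  txt \<open>The method \<open>algebra\<close> works in commutative rings, so \<open>1/2\<close> and \<open>\<nu>/2\<close> are traded for
    \<open>q\<close> with \<open>2q = 1\<close> and \<open>h\<close> with \<open>\<nu> = 2h\<close>.\<close>
  define h where "h = \<nu>/2"
  define q :: 'a where "q = 1/2"
  have nu: "\<nu> = 2*h" and h: "\<nu>/2 = h" using two by (simp_all add: h_def)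
  have q: "1/2 = q" "2*q = 1" using two by (simp_all add: q_def)
  show ?thesis
    unfolding m_def A_def B_def q(1)
    apply (induction i rule: nat_cases_0_1_SucSuc)
      apply (simp_all only: raising_op_linear lowering_op_linear raising_op_monom lowering_op_monom_0
        lowering_op_monom_Suc)
      apply (auto simp: two poly_eq_iff coeff_pCons split: nat.split if_splits)
     apply (unfold theta_def theta_s_def phi_def zeta_def zeta_s_def eta_def h)
     apply (unfold nu of_nat_Suc of_nat_0)
    using q(2) apply algebra+
    done
qed

theorem proposition3p1:
  fixes a b c \<nu> :: "'a::field"
  assumes "alg_closed TYPE('a)"
    and two: "(2::'a) \<noteq> 0"
  shows "\<exists>A B C D :: 'a poly \<Rightarrow> 'a poly.
           racah_module A B C D \<and>
           (\<forall>i. A (monom 1 i) = smult (theta a \<nu> i) (monom 1 i) + monom 1 (Suc i)) \<and>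
           B (monom 1 0) = smult (theta_s b \<nu> 0) (monom 1 0) \<and>
           (\<forall>i\<ge>1. B (monom 1 i) = smult (theta_s b \<nu> i) (monom 1 i)
                                   + smult (phi a b c \<nu> i) (monom 1 (i - 1))) \<and>
           (\<forall>v. r_alpha A B C D v = smult (zeta a b c \<nu>) v) \<and>
           (\<forall>v. r_beta A B C D v = smult (zeta_s a b c \<nu>) v) \<and>
           (\<forall>v. r_delta A B C v = smult (eta a b c \<nu>) v)"
proof -
  define A where "A = raising_op (theta a \<nu>)"
  define B where "B = lowering_op (theta_s b \<nu>) (phi a b c \<nu>)"
  define C where "C = (\<lambda>v. smult (eta a b c \<nu>) v - A v - B v)"
  define D where "D = (\<lambda>v. smult (1/2) (comm A B v))"
  have "flin A" "flin B"
    by (simp_all add: A_def B_def flin_raising_op flin_lowering_op)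
  note ops = this C_def D_def two
  have alpha: "r_alpha A B C D v = smult (zeta a b c \<nu>) v" for v
    by (rule flin_eq_smult_if_monom[OF flin_r_alpha[OF ops(1,2) flin_C[OF ops] flin_D[OF ops]]])
      (simp only: r_alpha_eq[OF ops], unfold A_def B_def, rule racah_scalar_identities_monom[OF two, THEN conjunct1])
  have beta: "r_beta A B C D v = smult (zeta_s a b c \<nu>) v" for v
    by (rule flin_eq_smult_if_monom[OF flin_r_beta[OF ops(1,2) flin_C[OF ops] flin_D[OF ops]]])
      (simp only: r_beta_eq[OF ops], unfold A_def B_def, rule racah_scalar_identities_monom[OF two, THEN conjunct2])
  show ?thesis
  proof (intro exI conjI allI impI)
    show "racah_module A B C D"
      by (rule racah_module_if_scalar_alpha_beta[OF ops alpha beta])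
    show "B (monom 1 i) = smult (theta_s b \<nu> i) (monom 1 i) + smult (phi a b c \<nu> i) (monom 1 (i - 1))"
      if "i \<ge> 1" for i
      using that by (cases i) (simp_all add: B_def lowering_op_monom_Suc)
    show "A (monom 1 i) = smult (theta a \<nu> i) (monom 1 i) + monom 1 (Suc i)" for i
      unfolding A_def by (rule raising_op_monom)
    show "B (monom 1 0) = smult (theta_s b \<nu> 0) (monom 1 0)"
      unfolding B_def by (rule lowering_op_monom_0)
    show "r_delta A B C v = smult (eta a b c \<nu>) v" for v
      by (simp add: r_delta_def C_def)
  qed (fact alpha beta)+
qed

end
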